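(* Let $h$ and $k$ be odd positive integers with $\gcd(h,k)=1$. Then $$kB_{1}(h,k)+hB_{1}(k,h)=\frac{1}{2}(h-1)(k-1).$$
   Context: $[x]$ denotes the greatest integer $\le x$. For integers $a,b$ with $b>0$ and $\gcd(a,b)=1$, define $$B_{1}(a,b)=\sum_{j=1}^{b-1}(-1)^{j+\left[\frac{aj}{b}\right]}\left[\frac{aj}{b}\right].$$ *)

theory Defs
  imports Complex_Main
begin

definition B1 :: "int \<Rightarrow> int \<Rightarrow> int" where
  "B1 a b = (\<Sum>j=1..b-1. (if even (j + (a*j) div b) then 1 else -1) * ((a*j) div b))"

end

theory Submission
  imports Defs "HOL-Number_Theory.Modular_Inverse"
begin

text \<open>
  Since h and k are odd, writing hj = k [hj/k] + r_j gives (-1)^(j + [hj/k]) = (-1)^r_j, so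
  k B_1(h,k) = sum_j (-1)^r_j (hj - r_j). As j runs through 1..k-1 so does r_j, and
  sum_{r<k} (-1)^r r = (k-1)/2; hence 2k B_1(h,k) = 2h V(h,k) - (k-1), where
  V(h,k) = sum_{j<k} (-1)^(hj mod k) j.

  The reciprocity 2h V(h,k) + 2k V(k,h) = hk - 1 is summation by parts for
  s(n) = (-1)^(n mod h) (-1)^(n mod k) on 0 <= n < hk. Passing from n-1 to n flips both signs
  unless h or k divides n, so s jumps (by 2 or -2) only at the multiples of h or of k, and these
  jumps produce 2h V(h,k) + 2k V(k,h). On the other side s(hk-1) = 1 and, by the Chinese
  remainder theorem, sum_n s(n) = (sum_{a<h} (-1)^a) (sum_{b<k} (-1)^b) = 1.
\<close>

definition neg_one_power :: "int \<Rightarrow> int" where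
  "neg_one_power n = (if even n then 1 else -1)"

lemma neg_one_power_diff_one [simp]: "neg_one_power (n - 1) = - neg_one_power n"
  by (simp add: neg_one_power_def)

lemma neg_one_power_add_div:
  fixes a b j :: int
  assumes "odd a" "odd b"
  shows "neg_one_power (j + a * j div b) = neg_one_power (a * j mod b)"
proof -
  define q r where "q = a * j div b" and "r = a * j mod b"
  have "a * j = b * q + r"
    by (simp add: q_def r_def)
  then have "even j \<longleftrightarrow> (even q \<longleftrightarrow> even r)"
    using assms by (metis even_add even_mult_iff)
  then show ?thesis
    by (auto simp: neg_one_power_def q_def r_def)
qed

lemma summation_by_parts_int:
  fixes f :: "int \<Rightarrow> 'a::comm_ring_1" and N :: int
  assumes "N \<ge> 1"
  shows "(\<Sum>m=1..<N. (f m - f (m - 1)) * of_int m) = of_int N * f (N - 1) - (\<Sum>n=0..<N. f n)"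
  using assms
proof (induction N rule: int_ge_induct)
  case base
  then show ?case
    by (simp add: atLeastLessThanPlusOne_atLeastAtMost_int[of 0 0, simplified])
next
  case (step N)
  have "{1..<N + 1} = insert N {1..<N}" "{0..<N + 1} = insert N {0..<N}"
    using step by auto
  with step show ?case by (simp add: algebra_simps)
qed

lemma bij_betw_mod_pair:
  fixes h k :: int
  assumes "h > 0" "k > 0" "coprime h k"
  shows "bij_betw (\<lambda>n. (n mod h, n mod k)) {0..<h * k} ({0..<h} \<times> {0..<k})"
proof -
  let ?f = "\<lambda>n. (n mod h, n mod k)"
  have "inj_on ?f {0..<h * k}"
  proof (rule inj_onI)
    fix x y assume "x \<in> {0..<h * k}" "y \<in> {0..<h * k}" "?f x = ?f y"
    then have "h * k dvd x - y" "x mod (h * k) = x" "y mod (h * k) = y"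
      using assms by (auto simp: mod_eq_dvd_iff divides_mult)
    then show "x = y"
      by (metis mod_eq_dvd_iff)
  qed
  moreover have "?f ` {0..<h * k} \<subseteq> {0..<h} \<times> {0..<k}"
    using assms by auto
  moreover have "card ({0..<h} \<times> {0..<k}) = card {0..<h * k}"
    using assms by (simp add: card_cartesian_product nat_mult_distrib)
  ultimately show ?thesis
    by (simp add: bij_betw_def card_image card_subset_eq)
qed

lemma sum_neg_one_power_odd:
  fixes n :: int
  assumes "odd n" "n > 0"
  shows "(\<Sum>a=0..<n. neg_one_power a) = 1" and "2 * (\<Sum>a=1..<n. neg_one_power a * a) = n - 1"
proof -
  define t where "t = nat (n div 2)"
  have n: "n = 2 * int t + 1"
    using assms by (simp add: t_def)
  have "(\<Sum>a=0..<2 * int t + 1. neg_one_power a) = 1 \<and>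
        2 * (\<Sum>a=1..<2 * int t + 1. neg_one_power a * a) = 2 * int t"
  proof (induction t)
    case 0
    then show ?case
      by (simp add: neg_one_power_def atLeastLessThanPlusOne_atLeastAtMost_int[of 0 0, simplified])
  next
    case (Suc t)
    have "{0..<2 * int (Suc t) + 1} = insert (2 * int t + 2) (insert (2 * int t + 1) {0..<2 * int t + 1})"
         "{1..<2 * int (Suc t) + 1} = insert (2 * int t + 2) (insert (2 * int t + 1) {1..<2 * int t + 1})"
      by auto
    with Suc show ?case
      by (simp add: neg_one_power_def)
  qed
  with n show "(\<Sum>a=0..<n. neg_one_power a) = 1" and "2 * (\<Sum>a=1..<n. neg_one_power a * a) = n - 1"
    by simp_all
qed

lemma neg_one_power_mod_diff_one:
  fixes h m :: int
  assumes "h > 0" "odd h"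
  shows "neg_one_power ((m - 1) mod h) = (if h dvd m then 1 else - neg_one_power (m mod h))"
proof (cases "h dvd m")
  case True
  then have "(m - 1) mod h = (-1) mod h"
    using mod_diff_left_eq[of m h 1] by (simp add: dvd_eq_mod_eq_0)
  with True assms show ?thesis
    by (simp add: zmod_minus1 neg_one_power_def)
next
  case False
  have "(m - 1) mod h = m mod h - 1"
  proof -
    have "m mod h \<noteq> 0" "0 \<le> m mod h" "m mod h < h"
      using False assms by (simp_all add: dvd_eq_mod_eq_0)
    then show ?thesis
      using mod_diff_left_eq[of m h 1] mod_pos_pos_trivial[of "m mod h - 1" h] by linarith
  qed
  with False show ?thesis
    by simp
qed

lemma neg_one_power_mod_pair_jump:
  fixes h k m :: int
  assumes "h > 0" "k > 0" "odd h" "odd k" "\<not> (h dvd m \<and> k dvd m)"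
  shows "neg_one_power (m mod h) * neg_one_power (m mod k)
           - neg_one_power ((m - 1) mod h) * neg_one_power ((m - 1) mod k)
         = 2 * (if h dvd m then neg_one_power (m mod k) else 0)
           + 2 * (if k dvd m then neg_one_power (m mod h) else 0)"
  using assms neg_one_power_mod_diff_one[of h m] neg_one_power_mod_diff_one[of k m]
  by (auto simp: neg_one_power_def)

lemma sum_if_dvd_eq_sum_multiples:
  fixes g :: "int \<Rightarrow> 'a::comm_monoid_add" and h k :: int
  assumes "h > 0"
  shows "(\<Sum>m=1..<h * k. if h dvd m then g m else 0) = (\<Sum>j=1..<k. g (h * j))"
proof -
  have "{m \<in> {1..<h * k}. h dvd m} = (*) h ` {1..<k}"
  proof (intro equalityI subsetI)
    fix m assume "m \<in> {m \<in> {1..<h * k}. h dvd m}"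
    then obtain j where "m = h * j" "1 \<le> h * j" "h * j < h * k"
      by auto
    moreover have "1 \<le> j" "j < k"
      using calculation assms zero_less_mult_pos[of h j] by auto
    ultimately show "m \<in> (*) h ` {1..<k}"
      by auto
  qed (use assms in \<open>auto simp: int_one_le_iff_zero_less\<close>)
  moreover have "inj_on ((*) h) {1..<k}"
    using assms by (simp add: inj_on_def)
  ultimately show ?thesis
    by (simp add: sum.inter_filter[symmetric] sum.reindex)
qed

definition residue_sign_sum :: "int \<Rightarrow> int \<Rightarrow> int" where
  "residue_sign_sum h k = (\<Sum>j=1..<k. neg_one_power (h * j mod k) * j)"

lemma mult_residue_sign_sum:
  "h * residue_sign_sum h k = (\<Sum>j=1..<k. neg_one_power (h * j mod k) * (h * j))"
  by (simp add: residue_sign_sum_def sum_distrib_left mult.left_commute)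

lemma B1_eq_sum_neg_one_power:
  "B1 a b = (\<Sum>j=1..<b. neg_one_power (j + a * j div b) * (a * j div b))"
  by (simp add: B1_def neg_one_power_def atLeastLessThanPlusOne_atLeastAtMost_int[of 1 "b - 1", symmetric])

lemma B1_eq_residue_sign_sum:
  fixes h k :: int
  assumes "k > 0" "odd h" "odd k" "coprime h k"
  shows "2 * (k * B1 h k) = 2 * (h * residue_sign_sum h k) - (k - 1)"
proof -
  let ?\<epsilon> = "\<lambda>j. neg_one_power (h * j mod k)"
  have "k * B1 h k = (\<Sum>j=1..<k. ?\<epsilon> j * (k * (h * j div k)))"
    by (simp add: B1_eq_sum_neg_one_power neg_one_power_add_div[OF assms(2,3)] sum_distrib_left
        mult.left_commute)
  also have "\<dots> = (\<Sum>j=1..<k. ?\<epsilon> j * (h * j) - ?\<epsilon> j * (h * j mod k))"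
    by (simp add: minus_mod_eq_mult_div[symmetric] right_diff_distrib)
  also have "\<dots> = h * residue_sign_sum h k - (\<Sum>r=1..<k. neg_one_power r * r)"
    using sum.reindex_bij_betw[OF bij_betw_int_remainders_mult[OF assms(4)], of "\<lambda>r. neg_one_power r * r"]
    by (simp add: mult_residue_sign_sum sum_subtractf)
  finally show ?thesis
    using sum_neg_one_power_odd(2)[OF assms(3,1)] by simp
qed

lemma residue_sign_sum_reciprocity:
  fixes h k :: int
  assumes "h > 0" "k > 0" "odd h" "odd k" "coprime h k"
  shows "2 * (h * residue_sign_sum h k) + 2 * (k * residue_sign_sum k h) = h * k - 1"
proof -
  define s where "s n = neg_one_power (n mod h) * neg_one_power (n mod k)" for n
  have "(\<Sum>n=0..<h * k. s n) = (\<Sum>(a, b)\<in>{0..<h} \<times> {0..<k}. neg_one_power a * neg_one_power b)"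
    using sum.reindex_bij_betw[OF bij_betw_mod_pair[OF assms(1,2,5)],
        of "\<lambda>p. neg_one_power (fst p) * neg_one_power (snd p)"]
    by (simp add: s_def case_prod_beta)
  also have "\<dots> = (\<Sum>a=0..<h. neg_one_power a) * (\<Sum>b=0..<k. neg_one_power b)"
    by (simp add: sum_product sum.cartesian_product)
  also have "\<dots> = 1"
    using sum_neg_one_power_odd(1)[OF assms(3,1)] sum_neg_one_power_odd(1)[OF assms(4,2)] by simp
  finally have total: "(\<Sum>n=0..<h * k. s n) = 1" .
  have last: "s (h * k - 1) = 1"
    using assms neg_one_power_mod_diff_one[of h "h * k"] neg_one_power_mod_diff_one[of k "h * k"]
    by (simp add: s_def)
  have "h * k \<ge> 1"
    using assms by (simp add: int_one_le_iff_zero_less)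
  then have by_parts: "(\<Sum>m=1..<h * k. (s m - s (m - 1)) * m) = h * k - 1"
    using summation_by_parts_int[of "h * k" s] total last by simp
  have jump: "s m - s (m - 1) = 2 * (if h dvd m then neg_one_power (m mod k) else 0)
                              + 2 * (if k dvd m then neg_one_power (m mod h) else 0)"
    if "m \<in> {1..<h * k}" for m
  proof -
    have "\<not> (h dvd m \<and> k dvd m)"
      using that assms divides_mult[of h m k] zdvd_not_zless[of m "h * k"] by auto
    then show ?thesis
      using neg_one_power_mod_pair_jump[OF assms(1-4)] by (simp add: s_def)
  qed
  have "(\<Sum>m=1..<h * k. (s m - s (m - 1)) * m)
      = 2 * (\<Sum>m=1..<h * k. if h dvd m then neg_one_power (m mod k) * m else 0)
      + 2 * (\<Sum>m=1..<k * h. if k dvd m then neg_one_power (m mod h) * m else 0)"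
    unfolding sum_distrib_left mult.commute[of k h] sum.distrib[symmetric]
    by (intro sum.cong refl) (simp add: jump)
  also have "\<dots> = 2 * (h * residue_sign_sum h k) + 2 * (k * residue_sign_sum k h)"
    by (simp only: sum_if_dvd_eq_sum_multiples[OF assms(1)] sum_if_dvd_eq_sum_multiples[OF assms(2)]
        mult_residue_sign_sum)
  finally show ?thesis
    using by_parts by linarith
qed

theorem theorem15:
  fixes h k :: int
  assumes "h > 0" "k > 0" "odd h" "odd k" "gcd h k = 1"
  shows "real_of_int (k * B1 h k + h * B1 k h) = (1/2) * real_of_int ((h - 1) * (k - 1))"
proof -
  have hk: "coprime h k" and kh: "coprime k h"
    using assms(5) by (simp_all add: coprime_iff_gcd_eq_1 gcd.commute)
  have "(h - 1) * (k - 1) = h * k - h - k + 1"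
    by (simp add: algebra_simps)
  then have "2 * (k * B1 h k) + 2 * (h * B1 k h) = (h - 1) * (k - 1)"
    using B1_eq_residue_sign_sum[OF assms(2,3,4) hk] B1_eq_residue_sign_sum[OF assms(1,4,3) kh]
      residue_sign_sum_reciprocity[OF assms(1-4) hk]
    by linarith
  then have "2 * (k * B1 h k + h * B1 k h) = (h - 1) * (k - 1)"
    by (simp only: distrib_left)
  then have "2 * real_of_int (k * B1 h k + h * B1 k h) = real_of_int ((h - 1) * (k - 1))"
    by (metis of_int_mult of_int_numeral)
  then show ?thesis
    by simp
qed

end
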